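(* Let $\Gamma$ be a cycle (a graph whose underlying simple graph is a cycle), possibly with some 2-fold edges. Then $\Gamma$ is the family diagram of at most one family of spherical simplices whose dihedral angles lie in $\{\frac{\pi}{2},\frac{\pi}{3},\frac{2\pi}{3},\frac{\pi}{4},\frac{3\pi}{4}\}$ (families considered up to isometry).
   Context: A spherical simplex in $S^n\subset\mathbb{R}^{n+1}$ is given by unit outer normals $f_1,\dots,f_{n+1}$ to its facets; the hyperplanes $f_i^\perp$ cut $S^n$ into $2^{n+1}$ simplices encoded by $\pm f_1,\dots,\pm f_{n+1}$, called a family. For a simplex whose dihedral angles are of the form $\pi/k$ or $\pi(k-1)/k$, its family diagram is the graph with vertices $v_i$ corresponding to the $f_i$, where $v_i$ and $v_j$ are joined by a $(k-2)$-fold edge if the angle between $f_i,f_j$ is $\pi/k$ or $\pi(k-1)/k$, and are not joined if $f_i\perp f_j$. All simplices of a family have the same family diagram; a graph is the family diagram of a family if it is the family diagram of its simplices. *)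

theory Defs
  imports "HOL-Analysis.Analysis"
begin

definition vec_angle :: "'a::euclidean_space \<Rightarrow> 'a \<Rightarrow> real" where
  "vec_angle u v = arccos ((u \<bullet> v) / (norm u * norm v))"

text \<open>A spherical simplex in the unit sphere of 'a (of dimension DIM('a) = n+1),
  given by its unit outer facet normals f 0, ..., f (n) (indices below DIM('a)).\<close>
definition spherical_simplex :: "(nat \<Rightarrow> 'a::euclidean_space) \<Rightarrow> bool" where
  "spherical_simplex f \<longleftrightarrow>
     (\<forall>i<DIM('a). norm (f i) = 1) \<and> inj_on f {..<DIM('a)} \<and>
     independent (f ` {..<DIM('a)})"

text \<open>All dihedral angles lie in {pi/2, pi/3, 2pi/3, pi/4, 3pi/4}. (This set is closed
  under theta -> pi - theta, so it does not matter whether one uses the angle between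
  the normals or its supplement; it also holds for every simplex of the family.)\<close>
definition allowed_angles :: "(nat \<Rightarrow> 'a::euclidean_space) \<Rightarrow> bool" where
  "allowed_angles f \<longleftrightarrow>
     (\<forall>i<DIM('a). \<forall>j<DIM('a). i \<noteq> j \<longrightarrow>
        vec_angle (f i) (f j) \<in> {pi/2, pi/3, 2*pi/3, pi/4, 3*pi/4})"

definition family_diagram :: "(nat \<Rightarrow> 'a::euclidean_space) \<Rightarrow> (nat \<Rightarrow> nat \<Rightarrow> nat) \<Rightarrow> bool" where
  "family_diagram f \<Gamma> \<longleftrightarrow>
     (\<forall>i<DIM('a). \<forall>j<DIM('a). i \<noteq> j \<longrightarrow>
        (\<exists>k::nat. k \<ge> 2 \<and>
           (vec_angle (f i) (f j) = pi / real k \<or>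
            vec_angle (f i) (f j) = pi * (real k - 1) / real k) \<and>
           \<Gamma> i j = k - 2))"

definition cycle_diagram :: "nat \<Rightarrow> (nat \<Rightarrow> nat \<Rightarrow> nat) \<Rightarrow> bool" where
  "cycle_diagram N \<Gamma> \<longleftrightarrow> N \<ge> 3 \<and>
     (\<forall>i<N. \<forall>j<N. \<Gamma> i j = \<Gamma> j i \<and> \<Gamma> i j \<le> 2) \<and>
     (\<exists>p. bij_betw p {..<N} {..<N} \<and>
        (\<forall>i<N. \<forall>j<N. \<Gamma> i j > 0 \<longleftrightarrow> (p j = Suc (p i) mod N \<or> p i = Suc (p j) mod N)))"

text \<open>The family of simplices determined by f, encoded by the set of vectors +-f i.\<close>
definition family_vectors :: "(nat \<Rightarrow> 'a::euclidean_space) \<Rightarrow> 'a set" where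
  "family_vectors f = {v. \<exists>i<DIM('a). v = f i \<or> v = - f i}"

definition isometric_families :: "(nat \<Rightarrow> 'a::euclidean_space) \<Rightarrow> (nat \<Rightarrow> 'a) \<Rightarrow> bool" where
  "isometric_families f g \<longleftrightarrow>
     (\<exists>Q. orthogonal_transformation Q \<and> Q ` family_vectors f = family_vectors g)"

end

theory Submission
  imports Defs
begin

(* The family diagram fixes the absolute values of all inner products of the unit normals:
   f i \<bullet> f j = 0 off the cycle and |f i \<bullet> f j| = cos (pi / k) \<ge> 1/2 along it.  Flipping
   normals f i \<mapsto> - f i does not change the family, and it can turn any sign pattern on the
   edges of the cycle into any other one with the same product of signs around the cycle.
   That product is forced: if the signs of c m = f m \<bullet> f (m + 1) had product (-1)^N, one could
   choose signs t m with t m t (m + 1) c m = - |c m|, and then \<Sum> t m f m would have squared norm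
   N - 2 \<Sum> |c m| \<le> 0, contradicting linear independence.  So after flipping normals the two
   Gram matrices agree, and an orthogonal map carries one family onto the other. *)

lemma Suc_mod_eq_if: "m < N \<Longrightarrow> Suc m mod N = (if Suc m = N then 0 else Suc m)"
  by auto

lemma prod_lessThan_Suc_mod:
  fixes s :: "nat \<Rightarrow> 'b::comm_monoid_mult"
  assumes "(\<Prod>k<N. s k) = 1" and "m < N"
  shows "(\<Prod>k<Suc m mod N. s k) = (\<Prod>k<m. s k) * s m"
  using assms by (auto simp: Suc_mod_eq_if)

lemma abs_prod_lessThan_eq_1:
  fixes s :: "nat \<Rightarrow> 'b::linordered_idom"
  assumes "\<And>k. k < N \<Longrightarrow> \<bar>s k\<bar> = 1" and "m \<le> N"
  shows "\<bar>\<Prod>k<m. s k\<bar> = 1"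
  using assms by (simp add: abs_prod)

lemma sum_sum_cyclic_band:
  fixes a :: "nat \<Rightarrow> nat \<Rightarrow> 'b::comm_semiring_1"
  assumes N: "3 \<le> N"
    and band: "\<And>m m'. m < N \<Longrightarrow> m' < N \<Longrightarrow> m' \<noteq> m \<Longrightarrow> m' \<noteq> Suc m mod N \<Longrightarrow>
      m \<noteq> Suc m' mod N \<Longrightarrow> a m m' = 0"
    and sym: "\<And>m m'. m < N \<Longrightarrow> m' < N \<Longrightarrow> a m m' = a m' m"
  shows "(\<Sum>m<N. \<Sum>m'<N. a m m') = (\<Sum>m<N. a m m) + 2 * (\<Sum>m<N. a m (Suc m mod N))"
proof -
  let ?next = "\<lambda>m. Suc m mod N"
  have split: "a m m' = (if m' = m then a m m else 0) + (if m' = ?next m then a m (?next m) else 0)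
      + (if m = ?next m' then a m m' else 0)" if "m < N" "m' < N" for m m'
  proof -
    \<comment> \<open>For N \<ge> 3 the three cases are mutually exclusive.\<close>
    have "?next m \<noteq> m" "?next m' \<noteq> m'" "\<not> (m' = ?next m \<and> m = ?next m')"
      using that N by (auto simp: Suc_mod_eq_if split: if_splits)
    then show ?thesis using band that by auto
  qed
  have "(\<Sum>m<N. \<Sum>m'<N. a m m') = (\<Sum>m<N. \<Sum>m'<N. (if m' = m then a m m else 0)
      + (if m' = ?next m then a m (?next m) else 0) + (if m = ?next m' then a m m' else 0))"
    using split by (intro sum.cong) auto
  also have "\<dots> = (\<Sum>m<N. a m m) + (\<Sum>m<N. a m (?next m))
      + (\<Sum>m<N. \<Sum>m'<N. if m = ?next m' then a m m' else 0)"
    using N by (simp add: sum.distrib)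
  also have "(\<Sum>m<N. \<Sum>m'<N. if m = ?next m' then a m m' else 0) = (\<Sum>m'<N. a (?next m') m')"
    using N by (subst sum.swap) simp
  also have "\<dots> = (\<Sum>m<N. a m (?next m))"
    using sym N by (intro sum.cong) auto
  finally show ?thesis by (simp add: mult_2 add.assoc)
qed

lemma inner_sum_cyclic_band:
  fixes h :: "nat \<Rightarrow> 'a::real_inner" and t :: "nat \<Rightarrow> real"
  assumes N: "3 \<le> N"
    and band: "\<And>m m'. m < N \<Longrightarrow> m' < N \<Longrightarrow> m' \<noteq> m \<Longrightarrow> m' \<noteq> Suc m mod N \<Longrightarrow>
      m \<noteq> Suc m' mod N \<Longrightarrow> h m \<bullet> h m' = 0"
  shows "(\<Sum>m<N. t m *\<^sub>R h m) \<bullet> (\<Sum>m<N. t m *\<^sub>R h m) =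
    (\<Sum>m<N. t m * t m * (h m \<bullet> h m)) + 2 * (\<Sum>m<N. t m * t (Suc m mod N) * (h m \<bullet> h (Suc m mod N)))"
proof -
  have "(\<Sum>m<N. t m *\<^sub>R h m) \<bullet> (\<Sum>m<N. t m *\<^sub>R h m) = (\<Sum>m<N. \<Sum>m'<N. t m * t m' * (h m \<bullet> h m'))"
    by (simp add: inner_sum_left inner_sum_right sum_distrib_left mult.assoc)
      (intro sum.cong refl, simp add: inner_commute)
  also have "\<dots> = (\<Sum>m<N. t m * t m * (h m \<bullet> h m)) + 2 * (\<Sum>m<N. t m * t (Suc m mod N) * (h m \<bullet> h (Suc m mod N)))"
    using band by (intro sum_sum_cyclic_band[OF N]) (auto simp: inner_commute)
  finally show ?thesis .
qed

lemma independent_image_sum_eq_0: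
  fixes h :: "nat \<Rightarrow> 'a::real_vector"
  assumes "independent (h ` {..<N})" and "inj_on h {..<N}"
    and "(\<Sum>m<N. t m *\<^sub>R h m) = 0" and "m < N"
  shows "t m = 0"
proof -
  let ?u = "\<lambda>v. t (inv_into {..<N} h v)"
  have "(\<Sum>v\<in>h ` {..<N}. ?u v *\<^sub>R v) = (\<Sum>m<N. t m *\<^sub>R h m)"
    using assms(2) by (simp add: sum.reindex)
  then have "?u (h m) = 0"
    using assms by (intro independentD[OF assms(1)]) auto
  then show ?thesis using assms(2,4) by simp
qed

definition cyclic_unit_system :: "nat \<Rightarrow> (nat \<Rightarrow> 'a::real_inner) \<Rightarrow> bool" where
  "cyclic_unit_system N h \<longleftrightarrow> 3 \<le> N \<and> (\<forall>m<N. h m \<bullet> h m = 1) \<and>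
     (\<forall>m<N. \<forall>m'<N. m' \<noteq> m \<and> m' \<noteq> Suc m mod N \<and> m \<noteq> Suc m' mod N \<longrightarrow> h m \<bullet> h m' = 0) \<and>
     (\<forall>m<N. 1/2 \<le> \<bar>h m \<bullet> h (Suc m mod N)\<bar>) \<and>
     inj_on h {..<N} \<and> independent (h ` {..<N})"

lemma cyclic_unit_system_prod_sgn:
  assumes sys: "cyclic_unit_system N h"
  shows "(\<Prod>m<N. sgn (h m \<bullet> h (Suc m mod N))) = (-1) ^ Suc N"
proof -
  define c where "c m = h m \<bullet> h (Suc m mod N)" for m
  have N: "3 \<le> N" and unit: "\<And>m. m < N \<Longrightarrow> h m \<bullet> h m = 1"
    and band: "\<And>m m'. m < N \<Longrightarrow> m' < N \<Longrightarrow> m' \<noteq> m \<Longrightarrow> m' \<noteq> Suc m mod N \<Longrightarrow>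
      m \<noteq> Suc m' mod N \<Longrightarrow> h m \<bullet> h m' = 0"
    and big: "\<And>m. m < N \<Longrightarrow> 1/2 \<le> \<bar>c m\<bar>"
    using sys unfolding cyclic_unit_system_def c_def by auto
  have sgn_c: "\<bar>sgn (c m)\<bar> = 1" if "m < N" for m
    using big[OF that] by (auto simp: abs_sgn_eq)
  have "(\<Prod>m<N. sgn (c m)) \<noteq> (-1) ^ N"
  proof
    assume closed: "(\<Prod>m<N. sgn (c m)) = (-1) ^ N"
    \<comment> \<open>By closed these signs close up around the cycle, and they make every edge term
      of the squared norm of \<Sum> t m h m equal to - |c m|.\<close>
    define t where "t m = (\<Prod>k<m. - sgn (c k))" for m
    have "(\<Prod>k<N. - sgn (c k)) = (\<Prod>k<N. (-1) * sgn (c k))"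
      by simp
    also have "\<dots> = (-1) ^ N * (-1) ^ N"
      using closed by (simp only: prod.distrib) simp
    finally have "(\<Prod>k<N. - sgn (c k)) = 1"
      by (simp flip: power_mult_distrib)
    then have t_next: "t (Suc m mod N) = - t m * sgn (c m)" if "m < N" for m
      unfolding t_def using that by (simp add: prod_lessThan_Suc_mod)
    have t_sq: "t m * t m = 1" if "m < N" for m
      using abs_prod_lessThan_eq_1[of N "\<lambda>k. - sgn (c k)" m] sgn_c that
      unfolding t_def by (metis abs_minus_cancel abs_mult_self_eq less_imp_le mult_1_left)
    have edge: "t m * t (Suc m mod N) * c m = - \<bar>c m\<bar>" if "m < N" for m
      using t_sq[OF that] by (simp add: t_next[OF that] abs_sgn mult.commute mult.left_commute)
    define x where "x = (\<Sum>m<N. t m *\<^sub>R h m)"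
    have "x \<bullet> x = (\<Sum>m<N. t m * t m * (h m \<bullet> h m)) + 2 * (\<Sum>m<N. t m * t (Suc m mod N) * c m)"
      unfolding x_def c_def by (rule inner_sum_cyclic_band[OF N band])
    also have "\<dots> = real N - 2 * (\<Sum>m<N. \<bar>c m\<bar>)"
      by (simp add: t_sq unit edge sum_negf)
    also have "\<dots> \<le> 0"
      using sum_mono[of "{..<N}" "\<lambda>_. 1/2" "\<lambda>m. \<bar>c m\<bar>"] big by simp
    finally have "x = 0"
      by (metis inner_ge_zero inner_eq_zero_iff order_antisym)
    then have "t 0 = 0"
      using sys N unfolding x_def cyclic_unit_system_def by (intro independent_image_sum_eq_0) auto
    then show False by (simp add: t_def)
  qed
  moreover have "\<bar>\<Prod>m<N. sgn (c m)\<bar> = 1"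
    using abs_prod_lessThan_eq_1[of N "\<lambda>m. sgn (c m)" N] sgn_c by simp
  ultimately show ?thesis unfolding c_def by (cases "even N") (auto simp: abs_if split: if_splits)
qed

lemma cyclic_unit_systems_sign_switch:
  assumes F: "cyclic_unit_system N F" and G: "cyclic_unit_system N G"
    and abs_eq: "\<And>m m'. m < N \<Longrightarrow> m' < N \<Longrightarrow> \<bar>F m \<bullet> F m'\<bar> = \<bar>G m \<bullet> G m'\<bar>"
  obtains \<epsilon> :: "nat \<Rightarrow> real" where "\<And>m. m < N \<Longrightarrow> \<bar>\<epsilon> m\<bar> = 1"
    and "\<And>m m'. m < N \<Longrightarrow> m' < N \<Longrightarrow> \<epsilon> m * \<epsilon> m' * (F m \<bullet> F m') = G m \<bullet> G m'"
proof -
  define cF where "cF m = F m \<bullet> F (Suc m mod N)" for m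
  define cG where "cG m = G m \<bullet> G (Suc m mod N)" for m
  define s where "s m = sgn (cF m) * sgn (cG m)" for m
  define \<epsilon> where "\<epsilon> m = (\<Prod>k<m. s k)" for m
  have unitF: "\<And>m. m < N \<Longrightarrow> F m \<bullet> F m = 1" and unitG: "\<And>m. m < N \<Longrightarrow> G m \<bullet> G m = 1"
    and bandF: "\<And>m m'. m < N \<Longrightarrow> m' < N \<Longrightarrow> m' \<noteq> m \<Longrightarrow> m' \<noteq> Suc m mod N \<Longrightarrow>
      m \<noteq> Suc m' mod N \<Longrightarrow> F m \<bullet> F m' = 0"
    and bandG: "\<And>m m'. m < N \<Longrightarrow> m' < N \<Longrightarrow> m' \<noteq> m \<Longrightarrow> m' \<noteq> Suc m mod N \<Longrightarrow>
      m \<noteq> Suc m' mod N \<Longrightarrow> G m \<bullet> G m' = 0"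
    and nonzero: "\<And>m. m < N \<Longrightarrow> cF m \<noteq> 0 \<and> cG m \<noteq> 0"
    using F G unfolding cyclic_unit_system_def cF_def cG_def by force+
  \<comment> \<open>Both sign products equal (-1)^(N+1), so the prefix products \<epsilon> close up around the cycle.\<close>
  have "(\<Prod>k<N. s k) = (\<Prod>m<N. sgn (cF m)) * (\<Prod>m<N. sgn (cG m))"
    unfolding s_def by (rule prod.distrib)
  also have "\<dots> = 1"
    using cyclic_unit_system_prod_sgn[OF F] cyclic_unit_system_prod_sgn[OF G]
    unfolding cF_def cG_def by (simp flip: power_mult_distrib)
  finally have closed: "(\<Prod>k<N. s k) = 1" .
  have \<epsilon>_abs: "\<bar>\<epsilon> m\<bar> = 1" if "m \<le> N" for m
    unfolding \<epsilon>_def using nonzero that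
    by (intro abs_prod_lessThan_eq_1) (auto simp: s_def abs_mult abs_sgn_eq)
  then have \<epsilon>_sq: "\<epsilon> m * \<epsilon> m = 1" if "m \<le> N" for m
    using that by (metis abs_mult_self_eq mult_1_left)
  have edge: "\<epsilon> m * \<epsilon> (Suc m mod N) * cF m = cG m" if "m < N" for m
  proof -
    have "s m * cF m = sgn (cG m) * \<bar>cF m\<bar>"
      by (simp add: s_def abs_sgn mult_ac)
    also have "\<bar>cF m\<bar> = \<bar>cG m\<bar>"
      using abs_eq that by (simp add: cF_def cG_def)
    finally have "s m * cF m = cG m"
      by (simp add: sgn_mult_abs)
    moreover have "\<epsilon> (Suc m mod N) = \<epsilon> m * s m"
      unfolding \<epsilon>_def using closed that by (rule prod_lessThan_Suc_mod)
    ultimately show ?thesis using \<epsilon>_sq[of m] that by (simp add: algebra_simps)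
  qed
  have switch: "\<epsilon> m * \<epsilon> m' * (F m \<bullet> F m') = G m \<bullet> G m'" if "m < N" "m' < N" for m m'
  proof -
    consider "m' = m" | "m' = Suc m mod N" | "m = Suc m' mod N"
      | "m' \<noteq> m" "m' \<noteq> Suc m mod N" "m \<noteq> Suc m' mod N" by blast
    then show ?thesis
    proof cases
      case 1
      then show ?thesis using \<epsilon>_sq[of m] unitF unitG that by simp
    next
      case 2
      then show ?thesis using edge[OF that(1)] by (simp add: cF_def cG_def)
    next
      case 3
      then show ?thesis using edge[OF that(2)] by (simp add: cF_def cG_def inner_commute mult.commute)
    next
      case 4
      then show ?thesis using bandF bandG that by simp
    qed
  qed
  show ?thesis
    by (rule that[of \<epsilon>]) (auto simp: \<epsilon>_abs switch)
qed

lemma orthogonal_transformation_of_inner_eq: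
  fixes f g :: "nat \<Rightarrow> 'a::euclidean_space"
  assumes ind: "independent (f ` {..<DIM('a)})" and inj: "inj_on f {..<DIM('a)}"
    and gram: "\<And>i j. i < DIM('a) \<Longrightarrow> j < DIM('a) \<Longrightarrow> g i \<bullet> g j = f i \<bullet> f j"
  obtains Q where "orthogonal_transformation Q" and "\<And>i. i < DIM('a) \<Longrightarrow> Q (f i) = g i"
proof -
  let ?B = "f ` {..<DIM('a)}"
  obtain Q where lin: "linear Q" and QB: "\<forall>x\<in>?B. Q x = g (inv_into {..<DIM('a)} f x)"
    using linear_independent_extend[OF ind, of "\<lambda>x. g (inv_into {..<DIM('a)} f x)"] by blast
  have Qf: "Q (f i) = g i" if "i < DIM('a)" for i
    using QB that inj by simp
  have "span ?B = UNIV"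
    using card_ge_dim_independent[of ?B UNIV] ind card_image[OF inj] by auto
  moreover have "bilinear (\<lambda>x y. Q x \<bullet> Q y)"
    using lin bounded_bilinear.comp[OF bounded_bilinear_inner]
    by (simp add: bilinear_conv_bounded_bilinear linear_conv_bounded_linear)
  moreover have "bilinear ((\<bullet>) :: 'a \<Rightarrow> 'a \<Rightarrow> real)"
    by (simp add: bilinear_conv_bounded_bilinear bounded_bilinear_inner)
  moreover have "Q x \<bullet> Q y = x \<bullet> y" if "x \<in> ?B" and "y \<in> ?B" for x y
    using that by (auto simp: Qf gram)
  ultimately have "Q x \<bullet> Q y = x \<bullet> y" for x y
    using bilinear_eq[of "\<lambda>x y. Q x \<bullet> Q y" "(\<bullet>)" UNIV ?B UNIV ?B x y] by simp
  then have "orthogonal_transformation Q"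
    using lin unfolding orthogonal_transformation_def by blast
  then show ?thesis using that Qf by blast
qed

lemma abs_inner_eq_cos_if_vec_angle:
  fixes u v :: "'a::euclidean_space" and k :: nat
  assumes "norm u = 1" and "norm v = 1" and "2 \<le> k"
    and "vec_angle u v = pi / k \<or> vec_angle u v = pi * (real k - 1) / real k"
  shows "\<bar>u \<bullet> v\<bar> = cos (pi / k)"
proof -
  have "\<bar>u \<bullet> v\<bar> \<le> 1"
    using Cauchy_Schwarz_ineq2[of u v] assms(1,2) by simp
  then have inner: "u \<bullet> v = cos (vec_angle u v)"
    using assms(1,2) by (simp add: vec_angle_def cos_arccos_abs)
  have "pi / k \<le> pi / 2"
    using assms(3) by (intro divide_left_mono) auto
  moreover have "0 \<le> pi / k"
    by simp
  ultimately have "0 \<le> cos (pi / k)"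
    by (intro cos_ge_zero) linarith+
  moreover have "pi * (real k - 1) / real k = pi - pi / k"
    using assms(3) by (simp add: field_simps)
  ultimately show ?thesis
    using assms(4) inner by auto
qed

lemma cos_pi_div_ge_half:
  assumes "3 \<le> k"
  shows "1/2 \<le> cos (pi / real k)"
proof -
  have "pi / real k \<le> pi / 3"
    using assms by (intro divide_left_mono) auto
  then have "cos (pi / 3) \<le> cos (pi / real k)"
    by (intro cos_monotone_0_pi_le) auto
  then show ?thesis by (simp add: cos_60)
qed

lemma family_diagram_abs_inner:
  fixes f :: "nat \<Rightarrow> 'a::euclidean_space"
  assumes "spherical_simplex f" and "family_diagram f \<Gamma>"
    and "i < DIM('a)" and "j < DIM('a)" and "i \<noteq> j"
  shows "\<bar>f i \<bullet> f j\<bar> = cos (pi / real (\<Gamma> i j + 2))"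
proof -
  obtain k where "2 \<le> k" and "\<Gamma> i j = k - 2"
    and "vec_angle (f i) (f j) = pi / k \<or> vec_angle (f i) (f j) = pi * (real k - 1) / real k"
    using assms(2-5) unfolding family_diagram_def by blast
  moreover have "norm (f i) = 1" "norm (f j) = 1"
    using assms(1,3,4) unfolding spherical_simplex_def by auto
  ultimately show ?thesis
    using abs_inner_eq_cos_if_vec_angle[of "f i" "f j" k] by simp
qed

lemma family_diagram_abs_inner_eq:
  fixes f g :: "nat \<Rightarrow> 'a::euclidean_space"
  assumes "spherical_simplex f" and "family_diagram f \<Gamma>"
    and "spherical_simplex g" and "family_diagram g \<Gamma>"
    and "i < DIM('a)" and "j < DIM('a)"
  shows "\<bar>f i \<bullet> f j\<bar> = \<bar>g i \<bullet> g j\<bar>"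
proof (cases "i = j")
  case True
  then show ?thesis
    using assms(1,3,5) by (simp add: spherical_simplex_def norm_eq_1)
next
  case False
  then show ?thesis
    using assms by (simp add: family_diagram_abs_inner)
qed

lemma cyclic_unit_system_cycle_order:
  fixes f :: "nat \<Rightarrow> 'a::euclidean_space"
  assumes simplex: "spherical_simplex f" and diagram: "family_diagram f \<Gamma>"
    and N: "3 \<le> DIM('a)" and p: "bij_betw p {..<DIM('a)} {..<DIM('a)}"
    and adj: "\<And>i j. i < DIM('a) \<Longrightarrow> j < DIM('a) \<Longrightarrow>
      0 < \<Gamma> i j \<longleftrightarrow> p j = Suc (p i) mod DIM('a) \<or> p i = Suc (p j) mod DIM('a)"
  shows "cyclic_unit_system DIM('a) (f \<circ> inv_into {..<DIM('a)} p)"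
proof -
  let ?N = "DIM('a)"
  define q where "q = inv_into {..<?N} p"
  have q: "bij_betw q {..<?N} {..<?N}"
    unfolding q_def by (rule bij_betw_inv_into[OF p])
  then have q_lt: "q m < ?N" if "m < ?N" for m
    using that by (auto simp: bij_betw_def)
  have pq: "p (q m) = m" if "m < ?N" for m
    using p that unfolding q_def by (simp add: bij_betw_inv_into_right)
  have adj_q: "0 < \<Gamma> (q m) (q m') \<longleftrightarrow> m' = Suc m mod ?N \<or> m = Suc m' mod ?N"
    if "m < ?N" "m' < ?N" for m m'
    using adj[OF q_lt q_lt] pq that by simp
  have abs_inner: "\<bar>f (q m) \<bullet> f (q m')\<bar> = cos (pi / real (\<Gamma> (q m) (q m') + 2))"
    if "m < ?N" "m' < ?N" "m \<noteq> m'" for m m'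
  proof (rule family_diagram_abs_inner[OF simplex diagram q_lt[OF that(1)] q_lt[OF that(2)]])
    show "q m \<noteq> q m'"
      using pq that by metis
  qed
  have "f (q m) \<bullet> f (q m') = 0"
    if "m < ?N" "m' < ?N" "m' \<noteq> m" "m' \<noteq> Suc m mod ?N" "m \<noteq> Suc m' mod ?N" for m m'
    using abs_inner[of m m'] adj_q[of m m'] that by simp
  moreover have "1/2 \<le> \<bar>f (q m) \<bullet> f (q (Suc m mod ?N))\<bar>" if "m < ?N" for m
  proof -
    have "Suc m mod ?N < ?N" "Suc m mod ?N \<noteq> m"
      using N that by (auto simp: Suc_mod_eq_if)
    then show ?thesis
      using abs_inner adj_q[of m "Suc m mod ?N"] cos_pi_div_ge_half[of "\<Gamma> (q m) (q (Suc m mod ?N)) + 2"]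
        that by simp
  qed
  moreover have "f (q m) \<bullet> f (q m) = 1" if "m < ?N" for m
    using simplex q_lt[OF that] by (simp add: spherical_simplex_def norm_eq_1)
  moreover have "inj_on (f \<circ> q) {..<?N}"
    using simplex q by (auto simp: spherical_simplex_def bij_betw_def intro: comp_inj_on)
  moreover have "(f \<circ> q) ` {..<?N} = f ` {..<?N}"
    using q by (metis bij_betw_imp_surj_on image_comp)
  ultimately show ?thesis
    using N simplex unfolding cyclic_unit_system_def spherical_simplex_def q_def[symmetric] by auto
qed

lemma family_vectors_eq_if_signed_image:
  fixes f g :: "nat \<Rightarrow> 'a::euclidean_space"
  assumes "linear Q" and "\<And>i. i < DIM('a) \<Longrightarrow> Q (f i) = e i *\<^sub>R g i"
    and "\<And>i. i < DIM('a) \<Longrightarrow> \<bar>e i\<bar> = 1"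
  shows "Q ` family_vectors f = family_vectors g"
proof -
  have union: "family_vectors h = (\<Union>i<DIM('a). {h i, - h i})" for h :: "nat \<Rightarrow> 'a"
    unfolding family_vectors_def by auto
  have "Q ` {f i, - f i} = {g i, - g i}" if "i < DIM('a)" for i
    using assms(2,3)[OF that] linear_neg[OF assms(1)] by (auto simp: abs_if split: if_splits)
  then show ?thesis
    by (simp add: union image_UN)
qed

lemma isometric_families_if_switching_equivalent:
  fixes f g :: "nat \<Rightarrow> 'a::euclidean_space"
  assumes simplex: "spherical_simplex f"
    and e_abs: "\<And>i. i < DIM('a) \<Longrightarrow> \<bar>e i\<bar> = 1"
    and inner: "\<And>i j. i < DIM('a) \<Longrightarrow> j < DIM('a) \<Longrightarrow> e i * e j * (f i \<bullet> f j) = g i \<bullet> g j"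
  shows "isometric_families f g"
proof -
  have gram: "(e i *\<^sub>R g i) \<bullet> (e j *\<^sub>R g j) = f i \<bullet> f j" if "i < DIM('a)" "j < DIM('a)" for i j
  proof -
    have "e i * e i = 1" "e j * e j = 1"
      using e_abs that by (metis abs_mult_self_eq mult_1_left)+
    have "(e i *\<^sub>R g i) \<bullet> (e j *\<^sub>R g j) = e i * e j * (g i \<bullet> g j)"
      by simp
    also have "\<dots> = (e i * e i) * (e j * e j) * (f i \<bullet> f j)"
      unfolding inner[OF that, symmetric] by (simp add: mult_ac)
    finally show ?thesis
      using \<open>e i * e i = 1\<close> \<open>e j * e j = 1\<close> by simp
  qed
  have ind: "independent (f ` {..<DIM('a)})" and inj: "inj_on f {..<DIM('a)}"
    using simplex unfolding spherical_simplex_def by auto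
  obtain Q where Q: "orthogonal_transformation Q" and Qf: "\<And>i. i < DIM('a) \<Longrightarrow> Q (f i) = e i *\<^sub>R g i"
    using orthogonal_transformation_of_inner_eq[OF ind inj gram] by blast
  have "Q ` family_vectors f = family_vectors g"
    by (rule family_vectors_eq_if_signed_image[OF orthogonal_transformation_linear[OF Q] Qf e_abs])
  with Q show ?thesis
    unfolding isometric_families_def by blast
qed

theorem lemma1:
  fixes f g :: "nat \<Rightarrow> 'a::euclidean_space" and \<Gamma> :: "nat \<Rightarrow> nat \<Rightarrow> nat"
  assumes "cycle_diagram DIM('a) \<Gamma>"
    and "spherical_simplex f" and "allowed_angles f" and "family_diagram f \<Gamma>"
    and "spherical_simplex g" and "allowed_angles g" and "family_diagram g \<Gamma>"
  shows "isometric_families f g"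
proof -
  let ?N = "DIM('a)"
  from assms(1) obtain p where N: "3 \<le> ?N" and p: "bij_betw p {..<?N} {..<?N}"
    and adj: "\<And>i j. i < ?N \<Longrightarrow> j < ?N \<Longrightarrow>
      0 < \<Gamma> i j \<longleftrightarrow> p j = Suc (p i) mod ?N \<or> p i = Suc (p j) mod ?N"
    unfolding cycle_diagram_def by blast
  define q where "q = inv_into {..<?N} p"
  have q_lt: "q m < ?N" if "m < ?N" for m
    using p that unfolding q_def by (metis bij_betw_def inv_into_into lessThan_iff)
  have p_lt: "p i < ?N" and qp: "q (p i) = i" if "i < ?N" for i
    using p that unfolding q_def by (auto simp: bij_betw_def)
  have "cyclic_unit_system ?N (f \<circ> q)"
    unfolding q_def by (rule cyclic_unit_system_cycle_order[OF assms(2,4) N p adj])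
  moreover have "cyclic_unit_system ?N (g \<circ> q)"
    unfolding q_def by (rule cyclic_unit_system_cycle_order[OF assms(5,7) N p adj])
  ultimately obtain \<epsilon> where \<epsilon>_abs: "\<And>m. m < ?N \<Longrightarrow> \<bar>\<epsilon> m\<bar> = 1" and \<epsilon>_inner:
      "\<And>m m'. m < ?N \<Longrightarrow> m' < ?N \<Longrightarrow> \<epsilon> m * \<epsilon> m' * (f (q m) \<bullet> f (q m')) = g (q m) \<bullet> g (q m')"
    by (rule cyclic_unit_systems_sign_switch)
      (use family_diagram_abs_inner_eq[OF assms(2,4,5,7)] q_lt in auto)
  show ?thesis
  proof (rule isometric_families_if_switching_equivalent[OF assms(2), of "\<lambda>i. \<epsilon> (p i)"])
    show "\<bar>\<epsilon> (p i)\<bar> = 1" if "i < ?N" for i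
      using \<epsilon>_abs[OF p_lt[OF that]] .
    show "\<epsilon> (p i) * \<epsilon> (p j) * (f i \<bullet> f j) = g i \<bullet> g j" if "i < ?N" "j < ?N" for i j
      using \<epsilon>_inner[OF p_lt[OF that(1)] p_lt[OF that(2)]] by (simp add: qp that)
  qed
qed

end
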